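(* Let $\alpha$ be a hybrid program, $S\subseteq\mathrm{VAR}(\alpha)$, $\phi_{pre},\phi_{post}$ formulas, $o:S\to\mathbb{R}_{\ge0}$ an offset function, and $d,r\in\mathbb{R}$. Suppose that $\alpha$ is forward $r$-safe for $\phi_{pre}$ and $\phi_{post}$ with $r>0$, and that $\alpha_{S,o}$ and $\alpha$ are at forward simulation distance $d$ with respect to $\phi_{pre}$ and $\mathrm{VAR}(\phi_{post})$. Then $\alpha$ is forward $\delta$-robust under $o$-bounded $S$-attacks (for $\phi_{pre},\phi_{post}$) for some $\delta$ with $\delta\ge (r-d)/r$.
   Context: Fix a set $V$ of real-valued variables; a state is a map $\omega:V\to\mathbb{R}$, $\mathcal{S}$ the set of states. Hybrid programs: $x:=\theta$, $x:=*$, $x'=\theta\,\&\,Q$, $?\phi$, $\alpha;\beta$, $\alpha\cup\beta$, $\alpha^*$, with the standard relational semantics $[\![\alpha]\!]\subseteq\mathcal{S}\times\mathcal{S}$ of differential dynamic logic (assignment updates one variable; $x:=*$ sets $x$ to an arbitrary real; $x'=\theta\,\&\,Q$ follows a solution of the ODE for some duration $r\ge0$ staying in $[\![Q]\!]$ throughout; test, relational composition, union, reflexive-transitive closure). Formulas of dL (comparisons, $\neg,\wedge,\forall$, $[\alpha]\phi$) have semantics $[\![\phi]\!]\subseteq\mathcal{S}$. $[\![\mathrm{SP}(\alpha,\phi)]\!]=\{\nu\mid\exists\omega\in[\![\phi]\!],(\omega,\nu)\in[\![\alpha]\!]\}$. $\mathrm{VAR}(\alpha)$ and $\mathrm{VAR}(\phi)$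 denote the sets of variables (free and bound) of a program and of a formula. Distances: $d(\omega,\nu)=\sqrt{\sum_{x\in V}(\omega(x)-\nu(x))^2}$ and, for $H\subseteq V$, $d_H(\omega,\nu)=\sqrt{\sum_{x\in H}(\omega(x)-\nu(x))^2}$. For $X\subseteq\mathcal{S}$, $\mathrm{Dist}(\omega,X)=\inf\{d(\omega,\nu)\mid\nu\notin X\}$ if $\omega\in X$ and $-\inf\{d(\omega,\nu)\mid\nu\in X\}$ if $\omega\notin X$ (infima in $\mathbb{R}\cup\{\pm\infty\}$, $\inf\emptyset=\infty$). $\alpha$ is forward $r$-safe for $\phi_{pre}$ and $\phi_{post}$ if $r=\inf\{\mathrm{Dist}(\nu,[\![\phi_{post}]\!])\mid\nu\in[\![\mathrm{SP}(\alpha,\phi_{pre})]\!]\}$. Sensor modeling: each sensor variable $q_s$ has an associated physical variable $q_p$, and sensor reads are assignments $q_s:=q_p$. For $S\subseteq\mathrm{VAR}(\alpha)$ and $o:S\to\mathbb{R}_{\ge0}$, $\alpha_{S,o}$ is obtained from $\alpha$ by replacing every assignment to a variable $q_s\in S$ with $q_s:=*\,;\ ?(q_s\ge q_p-o(q_s)\wedge q_s\le q_p+o(q_s))$. Forward simulation distance: programs $\alpha_1,\alpha_2$ are at forward simulation distance $d$ with respect to $\phi_{pre}$ and $H\subseteq V$ if for every $\nu_1\in[\![\mathrm{SP}(\alpha_1,\phi_{pre})]\!]$ there is $\nu_2\in[\![\mathrm{SP}(\alpha_2,\phi_{pre})]\!]$ with $d_H(\nu_1,\nu_2)\le d$. Forward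 robustness: $\alpha$ is forward $\delta$-robust under $o$-bounded $S$-attacks (for $\phi_{pre},\phi_{post}$) if there are reals $r>0$ and $r_1$ such that $\alpha$ is forward $r$-safe, $\alpha_{S,o}$ is forward $r_1$-safe (both for $\phi_{pre},\phi_{post}$), and $\delta=r_1/r$. *)

theory Defs
  imports "HOL-Analysis.Analysis" "HOL-Library.Extended_Real"
begin

text \<open>Variables form a finite type 'v (the fixed finite set V); states are maps 'v => real.\<close>

type_synonym 'v state = "'v \<Rightarrow> real"

datatype 'v trm =
    Var 'v
  | Const real
  | Neg "'v trm"
  | Plus "'v trm" "'v trm"
  | Times "'v trm" "'v trm"

primrec tsem :: "'v trm \<Rightarrow> 'v state \<Rightarrow> real" where
  "tsem (Var x) w = w x"
| "tsem (Const c) w = c"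
| "tsem (Neg t) w = - tsem t w"
| "tsem (Plus t u) w = tsem t w + tsem u w"
| "tsem (Times t u) w = tsem t w * tsem u w"

primrec tvars :: "'v trm \<Rightarrow> 'v set" where
  "tvars (Var x) = {x}"
| "tvars (Const c) = {}"
| "tvars (Neg t) = tvars t"
| "tvars (Plus t u) = tvars t \<union> tvars u"
| "tvars (Times t u) = tvars t \<union> tvars u"

datatype 'v hp =
    Assign 'v "'v trm"
  | AssignAny 'v
  | ODE 'v "'v trm" "'v fml"
  | Test "'v fml"
  | Seq "'v hp" "'v hp"
  | Choice "'v hp" "'v hp"
  | Loop "'v hp"
and 'v fml =
    Geq "'v trm" "'v trm"
  | Gt "'v trm" "'v trm"
  | Equal "'v trm" "'v trm"
  | Not "'v fml"
  | And "'v fml" "'v fml"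
  | Forall 'v "'v fml"
  | Box "'v hp" "'v fml"

primrec hp_sem :: "'v hp \<Rightarrow> ('v state \<times> 'v state) set"
  and fml_sem :: "'v fml \<Rightarrow> 'v state set" where
  "hp_sem (Assign x t) = {(w, v). v = w(x := tsem t w)}"
| "hp_sem (AssignAny x) = {(w, v). \<exists>c. v = w(x := c)}"
| "hp_sem (ODE x t Q) = {(w, v). \<exists>r f. r \<ge> 0 \<and> f 0 = w x \<and> v = w(x := f r)
      \<and> (\<forall>s\<in>{0..r}. (f has_real_derivative tsem t (w(x := f s))) (at s within {0..r}))
      \<and> (\<forall>s\<in>{0..r}. w(x := f s) \<in> fml_sem Q)}"
| "hp_sem (Test P) = {(w, v). v = w \<and> w \<in> fml_sem P}"
| "hp_sem (Seq a b) = hp_sem a O hp_sem b"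
| "hp_sem (Choice a b) = hp_sem a \<union> hp_sem b"
| "hp_sem (Loop a) = (hp_sem a)\<^sup>*"
| "fml_sem (Geq t u) = {w. tsem t w \<ge> tsem u w}"
| "fml_sem (Gt t u) = {w. tsem t w > tsem u w}"
| "fml_sem (Equal t u) = {w. tsem t w = tsem u w}"
| "fml_sem (Not P) = - fml_sem P"
| "fml_sem (And P Q) = fml_sem P \<inter> fml_sem Q"
| "fml_sem (Forall x P) = {w. \<forall>c. w(x := c) \<in> fml_sem P}"
| "fml_sem (Box a P) = {w. \<forall>v. (w, v) \<in> hp_sem a \<longrightarrow> v \<in> fml_sem P}"

primrec hp_vars :: "'v hp \<Rightarrow> 'v set" and fml_vars :: "'v fml \<Rightarrow> 'v set" where
  "hp_vars (Assign x t) = {x} \<union> tvars t"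
| "hp_vars (AssignAny x) = {x}"
| "hp_vars (ODE x t Q) = {x} \<union> tvars t \<union> fml_vars Q"
| "hp_vars (Test P) = fml_vars P"
| "hp_vars (Seq a b) = hp_vars a \<union> hp_vars b"
| "hp_vars (Choice a b) = hp_vars a \<union> hp_vars b"
| "hp_vars (Loop a) = hp_vars a"
| "fml_vars (Geq t u) = tvars t \<union> tvars u"
| "fml_vars (Gt t u) = tvars t \<union> tvars u"
| "fml_vars (Equal t u) = tvars t \<union> tvars u"
| "fml_vars (Not P) = fml_vars P"
| "fml_vars (And P Q) = fml_vars P \<union> fml_vars Q"
| "fml_vars (Forall x P) = {x} \<union> fml_vars P"
| "fml_vars (Box a P) = hp_vars a \<union> fml_vars P"

definition SP :: "'v hp \<Rightarrow> 'v fml \<Rightarrow> 'v state set" where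
  "SP a P = {v. \<exists>w\<in>fml_sem P. (w, v) \<in> hp_sem a}"

definition sdist :: "('v::finite) state \<Rightarrow> 'v state \<Rightarrow> real" where
  "sdist w v = sqrt (\<Sum>x\<in>UNIV. (w x - v x)\<^sup>2)"

definition sdistH :: "'v set \<Rightarrow> 'v state \<Rightarrow> 'v state \<Rightarrow> real" where
  "sdistH H w v = sqrt (\<Sum>x\<in>H. (w x - v x)\<^sup>2)"

text \<open>Signed distance to a set of states, in the extended reals (Inf {} = \<infinity>).\<close>
definition Dist :: "('v::finite) state \<Rightarrow> 'v state set \<Rightarrow> ereal" where
  "Dist w X = (if w \<in> X then Inf {ereal (sdist w v) | v. v \<notin> X}
               else - Inf {ereal (sdist w v) | v. v \<in> X})"

definition fwd_safe :: "('v::finite) hp \<Rightarrow> 'v fml \<Rightarrow> 'v fml \<Rightarrow> real \<Rightarrow> bool" where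
  "fwd_safe a pre post r \<longleftrightarrow>
     ereal r = Inf {Dist v (fml_sem post) | v. v \<in> SP a pre}"

text \<open>Attacked program alpha_{S,o}; phys maps each sensor variable q_s to its physical variable q_p.\<close>
primrec attack :: "('v \<Rightarrow> 'v) \<Rightarrow> 'v set \<Rightarrow> ('v \<Rightarrow> real) \<Rightarrow> 'v hp \<Rightarrow> 'v hp" where
  "attack ph S off (Assign x t) =
     (if x \<in> S then Seq (AssignAny x)
        (Test (And (Geq (Var x) (Plus (Var (ph x)) (Const (- off x))))
                   (Geq (Plus (Var (ph x)) (Const (off x))) (Var x))))
      else Assign x t)"
| "attack ph S off (AssignAny x) = AssignAny x"
| "attack ph S off (ODE x t Q) = ODE x t Q"
| "attack ph S off (Test P) = Test P"
| "attack ph S off (Seq a b) = Seq (attack ph S off a) (attack ph S off b)"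
| "attack ph S off (Choice a b) = Choice (attack ph S off a) (attack ph S off b)"
| "attack ph S off (Loop a) = Loop (attack ph S off a)"

text \<open>Sensor modeling convention: every assignment to a sensor variable q_s in S is a sensor
  read q_s := q_p.\<close>
primrec sensor_reads :: "('v \<Rightarrow> 'v) \<Rightarrow> 'v set \<Rightarrow> 'v hp \<Rightarrow> bool" where
  "sensor_reads ph S (Assign x t) = (x \<in> S \<longrightarrow> t = Var (ph x))"
| "sensor_reads ph S (AssignAny x) = True"
| "sensor_reads ph S (ODE x t Q) = True"
| "sensor_reads ph S (Test P) = True"
| "sensor_reads ph S (Seq a b) = (sensor_reads ph S a \<and> sensor_reads ph S b)"
| "sensor_reads ph S (Choice a b) = (sensor_reads ph S a \<and> sensor_reads ph S b)"
| "sensor_reads ph S (Loop a) = sensor_reads ph S a"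

definition fwd_sim_dist :: "'v hp \<Rightarrow> 'v hp \<Rightarrow> 'v fml \<Rightarrow> 'v set \<Rightarrow> real \<Rightarrow> bool" where
  "fwd_sim_dist a1 a2 pre H d \<longleftrightarrow>
     (\<forall>v1\<in>SP a1 pre. \<exists>v2\<in>SP a2 pre. sdistH H v1 v2 \<le> d)"

definition fwd_robust :: "('v \<Rightarrow> 'v) \<Rightarrow> ('v::finite) hp \<Rightarrow> 'v set \<Rightarrow> ('v \<Rightarrow> real)
    \<Rightarrow> 'v fml \<Rightarrow> 'v fml \<Rightarrow> real \<Rightarrow> bool" where
  "fwd_robust ph a S off pre post \<delta> \<longleftrightarrow>
     (\<exists>r r1. r > 0 \<and> fwd_safe a pre post r \<and> fwd_safe (attack ph S off a) pre post r1
            \<and> \<delta> = r1 / r)"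

end

theory Submission
  imports Defs
begin

text \<open>Every run of \<alpha> is also a run of the attacked program, because an honest sensor read
  lies within any nonnegative offset; so the attacked safety margin r1 is at most r, in
  particular finite. Conversely, every final state \<nu>1 of the attacked program is within distance
  d, measured on the variables H of the postcondition, of a final state \<nu>2 of \<alpha>, whose r-ball
  lies inside the postcondition. As the postcondition depends only on H, that ball can be moved
  to the state agreeing with \<nu>2 on H and with \<nu>1 elsewhere, which is within distance d of \<nu>1.
  Hence r - d \<le> r1, and \<delta> = r1 / r \<ge> (r - d) / r.\<close>

lemma tsem_coincide: "tvars t \<subseteq> V \<Longrightarrow> \<forall>x\<in>V. w x = w' x \<Longrightarrow> tsem t w = tsem t w'"
  by (induction t) auto

lemma hp_fml_coincide:
  fixes a :: "'v hp" and P :: "'v fml"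
  shows "hp_vars a \<subseteq> V \<Longrightarrow> \<forall>x\<in>V. w x = w' x \<Longrightarrow> (w, v) \<in> hp_sem a \<Longrightarrow>
           \<exists>v'. (w', v') \<in> hp_sem a \<and> (\<forall>x\<in>V. v x = v' x)"
    and "fml_vars P \<subseteq> V \<Longrightarrow> \<forall>x\<in>V. w x = w' x \<Longrightarrow> w \<in> fml_sem P \<longleftrightarrow> w' \<in> fml_sem P"
proof (induction a and P arbitrary: V w w' v and V w w')
  case (Assign x t)
  then have "tsem t w = tsem t w'" by (auto intro: tsem_coincide[of t V])
  with Assign show ?case by auto
next
  case (AssignAny x)
  then show ?case by auto
next
  case (ODE x t Q)
  then obtain r f where "r \<ge> 0" "f 0 = w x" "v = w(x := f r)"
    and der: "\<forall>s\<in>{0..r}. (f has_real_derivative tsem t (w(x := f s))) (at s within {0..r})"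
    and inQ: "\<forall>s\<in>{0..r}. w(x := f s) \<in> fml_sem Q" by auto
  have agree_upd: "\<forall>y\<in>V. (w(x := c)) y = (w'(x := c)) y" for c
    using ODE.prems(2) by auto
  have "tsem t (w(x := c)) = tsem t (w'(x := c))" for c
    using ODE.prems(1) agree_upd[of c] by (auto intro: tsem_coincide[of t V])
  moreover have "w(x := c) \<in> fml_sem Q \<longleftrightarrow> w'(x := c) \<in> fml_sem Q" for c
    using ODE.prems(1) agree_upd[of c] by (intro ODE.IH[of V]) auto
  ultimately have "(w', w'(x := f r)) \<in> hp_sem (ODE x t Q)"
    using \<open>r \<ge> 0\<close> \<open>f 0 = w x\<close> ODE.prems der inQ by auto
  moreover have "\<forall>y\<in>V. v y = (w'(x := f r)) y"
    using \<open>v = w(x := f r)\<close> agree_upd by simp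
  ultimately show ?case by blast
next
  case (Test P)
  then show ?case using Test.IH[of V w w'] by auto
next
  case (Seq a b)
  then obtain u where "(w, u) \<in> hp_sem a" "(u, v) \<in> hp_sem b" by auto
  moreover have "hp_vars a \<subseteq> V" "hp_vars b \<subseteq> V" using Seq.prems(1) by auto
  ultimately obtain u' where "(w', u') \<in> hp_sem a" "\<forall>x\<in>V. u x = u' x"
    using Seq.IH(1) Seq.prems(2) by blast
  with Seq.IH(2) \<open>hp_vars b \<subseteq> V\<close> \<open>(u, v) \<in> hp_sem b\<close>
  obtain v' where "(u', v') \<in> hp_sem b" "\<forall>x\<in>V. v x = v' x" by blast
  with \<open>(w', u') \<in> hp_sem a\<close> show ?case by auto
next
  case (Choice a b)
  have "hp_vars a \<subseteq> V" "hp_vars b \<subseteq> V" using Choice.prems(1) by auto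
  then show ?case
    using Choice.prems(2,3) Choice.IH(1)[of V w w' v] Choice.IH(2)[of V w w' v] by auto
next
  case (Loop a)
  from Loop.prems(3) have "(w, v) \<in> (hp_sem a)\<^sup>*" by simp
  then have "\<exists>v'. (w', v') \<in> (hp_sem a)\<^sup>* \<and> (\<forall>x\<in>V. v x = v' x)"
  proof (induction rule: rtrancl_induct)
    case base
    then show ?case using Loop.prems(2) by auto
  next
    case (step u v)
    then obtain u' where "(w', u') \<in> (hp_sem a)\<^sup>*" "\<forall>x\<in>V. u x = u' x" by blast
    with Loop.IH[of V u u' v] Loop.prems(1) step(2)
    obtain v' where "(u', v') \<in> hp_sem a" "\<forall>x\<in>V. v x = v' x" by auto
    with \<open>(w', u') \<in> (hp_sem a)\<^sup>*\<close> show ?case by (meson rtrancl_into_rtrancl)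
  qed
  then show ?case by simp
next
  case (Geq t u)
  then show ?case using tsem_coincide[of t V w w'] tsem_coincide[of u V w w'] by auto
next
  case (Gt t u)
  then show ?case using tsem_coincide[of t V w w'] tsem_coincide[of u V w w'] by auto
next
  case (Equal t u)
  then show ?case using tsem_coincide[of t V w w'] tsem_coincide[of u V w w'] by auto
next
  case (Not P)
  then show ?case using Not.IH[of V w w'] by simp
next
  case (And P Q)
  then show ?case using And.IH(1)[of V w w'] And.IH(2)[of V w w'] by simp
next
  case (Forall x P)
  then have "w(x := c) \<in> fml_sem P \<longleftrightarrow> w'(x := c) \<in> fml_sem P" for c
    by (intro Forall.IH[of V]) auto
  then show ?case by simp
next
  case (Box a P)
  have transfer: "u' \<in> fml_sem (Box a P)"
    if box: "u \<in> fml_sem (Box a P)" and agree: "\<forall>x\<in>V. u' x = u x" for u u'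
  proof -
    have "v \<in> fml_sem P" if run: "(u', v) \<in> hp_sem a" for v
    proof -
      obtain v' where "(u, v') \<in> hp_sem a" "\<forall>x\<in>V. v x = v' x"
        using Box.IH(1)[of V u' u v] Box.prems(1) agree run by auto
      then show ?thesis using Box.IH(2)[of V v v'] Box.prems(1) box by auto
    qed
    then show ?thesis by simp
  qed
  have "\<forall>x\<in>V. w' x = w x" using Box.prems(2) by simp
  then show ?case using transfer[of w w'] transfer[of w' w] Box.prems(2) by blast
qed

definition depends_only_on :: "'v set \<Rightarrow> 'v state set \<Rightarrow> bool" where
  "depends_only_on H X \<longleftrightarrow> (\<forall>w w'. (\<forall>x\<in>H. w x = w' x) \<longrightarrow> (w \<in> X \<longleftrightarrow> w' \<in> X))"

lemma depends_only_onD: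
  "depends_only_on H X \<Longrightarrow> \<forall>x\<in>H. w x = w' x \<Longrightarrow> w \<in> X \<longleftrightarrow> w' \<in> X"
  unfolding depends_only_on_def by blast

lemma depends_only_on_fml_vars: "depends_only_on (fml_vars P) (fml_sem P)"
  unfolding depends_only_on_def using hp_fml_coincide(2) by blast

lemma hp_sem_subset_attack:
  assumes "sensor_reads ph S a" and "\<forall>x\<in>S. off x \<ge> 0"
  shows "hp_sem a \<subseteq> hp_sem (attack ph S off a)"
  using assms(1)
proof (induction a)
  case (Assign x t)
  show ?case
  proof (cases "x \<in> S")
    case True
    with Assign assms(2) have t: "t = Var (ph x)" and "off x \<ge> 0" by auto
    let ?read = "\<lambda>w. w(x := w (ph x))"
    let ?within_offset = "Test (And (Geq (Var x) (Plus (Var (ph x)) (Const (- off x))))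
                                    (Geq (Plus (Var (ph x)) (Const (off x))) (Var x)))"
    have "(w, ?read w) \<in> hp_sem (AssignAny x)" for w by auto
    moreover have "(?read w, ?read w) \<in> hp_sem ?within_offset" for w
      using \<open>off x \<ge> 0\<close> by (cases "ph x = x") simp_all
    ultimately have "(w, ?read w) \<in> hp_sem (AssignAny x) O hp_sem ?within_offset" for w
      by (rule relcompI)
    then have "(w, ?read w) \<in> hp_sem (attack ph S off (Assign x t))" for w
      using True by (simp only: attack.simps if_True hp_sem.simps(5))
    then show ?thesis using t by auto
  qed simp
next
  case (Seq a b)
  then show ?case by (simp add: relcomp_mono)
next
  case (Loop a)
  then show ?case by (simp add: rtrancl_mono)
qed auto

lemma SP_subset_attack:
  "sensor_reads ph S a \<Longrightarrow> \<forall>x\<in>S. off x \<ge> 0 \<Longrightarrow> SP a P \<subseteq> SP (attack ph S off a) P"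
  unfolding SP_def using hp_sem_subset_attack by blast

lemma sdist_sym: "sdist w v = sdist v w"
  unfolding sdist_def by (simp add: power2_commute)

lemma sdistH_sym: "sdistH H w v = sdistH H v w"
  unfolding sdistH_def by (simp add: power2_commute)

lemma sdistH_cong: "\<forall>x\<in>H. w x = w' x \<Longrightarrow> sdistH H w v = sdistH H w' v"
  unfolding sdistH_def by simp

lemma sdistH_le_sdist: "sdistH H w v \<le> sdist (w::('v::finite) state) v"
  unfolding sdistH_def sdist_def by (intro real_sqrt_le_mono sum_mono2) auto

lemma sdistH_triangle: "sdistH H u w \<le> sdistH H u v + sdistH H v w"
proof -
  have "sdistH H u w = L2_set (\<lambda>x. (u x - v x) + (v x - w x)) H"
    unfolding sdistH_def L2_set_def by simp
  also have "\<dots> \<le> L2_set (\<lambda>x. u x - v x) H + L2_set (\<lambda>x. v x - w x) H"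
    by (rule L2_set_triangle_ineq)
  also have "\<dots> = sdistH H u v + sdistH H v w"
    unfolding sdistH_def L2_set_def by simp
  finally show ?thesis .
qed

lemma sdist_patch:
  "sdist (w::('v::finite) state) (\<lambda>x. if x \<in> H then v x else w x) = sdistH H w v"
proof -
  have "(\<Sum>x\<in>UNIV. (w x - (if x \<in> H then v x else w x))\<^sup>2) =
      (\<Sum>x\<in>UNIV \<inter> H. (w x - v x)\<^sup>2)"
    by (subst sum.inter_restrict) (auto intro: sum.cong)
  then show ?thesis unfolding sdist_def sdistH_def by simp
qed

lemma sdist_segment_start:
  "sdist (w::('v::finite) state) (\<lambda>x. w x + c * (v x - w x)) = \<bar>c\<bar> * sdist w v"
proof -
  have "(\<Sum>x\<in>UNIV. (w x - (w x + c * (v x - w x)))\<^sup>2) = c\<^sup>2 * (\<Sum>x\<in>UNIV. (w x - v x)\<^sup>2)"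
    by (simp add: sum_distrib_left power2_eq_square algebra_simps)
  then show ?thesis unfolding sdist_def by (simp add: real_sqrt_mult)
qed

lemma sdist_segment_end:
  "sdist (v::('v::finite) state) (\<lambda>x. w x + c * (v x - w x)) = \<bar>1 - c\<bar> * sdist w v"
proof -
  have "(\<Sum>x\<in>UNIV. (v x - (w x + c * (v x - w x)))\<^sup>2) =
      (1 - c)\<^sup>2 * (\<Sum>x\<in>UNIV. (w x - v x)\<^sup>2)"
    by (simp add: sum_distrib_left power2_eq_square algebra_simps)
  then show ?thesis unfolding sdist_def by (simp add: real_sqrt_mult)
qed

lemma depends_only_on_sdistH_ge:
  assumes "depends_only_on H X" and "\<forall>u. u \<notin> X \<longrightarrow> r \<le> sdist w u" and "u \<notin> X"
  shows "r \<le> sdistH H w u"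
proof -
  let ?u = "\<lambda>x. if x \<in> H then u x else w x"
  have "\<forall>x\<in>H. ?u x = u x" by simp
  from depends_only_onD[OF assms(1) this] have "?u \<notin> X" using assms(3) by simp
  then have "r \<le> sdist w ?u" by (rule assms(2)[rule_format])
  then show ?thesis by (simp only: sdist_patch)
qed

lemma Inf_sdist_le_of_ball:
  fixes w v :: "('v::finite) state"
  assumes "0 < r" and "w \<in> X" and ball: "\<forall>u. u \<notin> X \<longrightarrow> r \<le> sdist w u" and "v \<notin> X"
  shows "Inf {ereal (sdist v u) | u. u \<in> X} \<le> ereal (sdist v w - r)"
proof (rule ereal_le_epsilon2)
  fix e :: real
  assume "0 < e"
  define D where "D = sdist w v"
  define s where "s = max 0 (r - e)"
  have "r \<le> D" using ball \<open>v \<notin> X\<close> unfolding D_def by blast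
  have "0 \<le> s" "s < r" "s \<le> D" using \<open>0 < r\<close> \<open>0 < e\<close> \<open>r \<le> D\<close> unfolding s_def by auto
  \<comment> \<open>The point of the segment from w to v at distance s < r from w lies in X.\<close>
  define p where "p = (\<lambda>x. w x + (s / D) * (v x - w x))"
  have "0 < D" using \<open>0 \<le> s\<close> \<open>s < r\<close> \<open>r \<le> D\<close> by linarith
  have "sdist w p = s"
    unfolding p_def sdist_segment_start D_def[symmetric] using \<open>0 < D\<close> \<open>0 \<le> s\<close> by simp
  have "p \<in> X"
  proof (rule ccontr)
    assume "p \<notin> X"
    then have "r \<le> sdist w p" using ball by blast
    with \<open>sdist w p = s\<close> \<open>s < r\<close> show False by simp
  qed
  have "sdist v p = D - s"
    unfolding p_def sdist_segment_end D_def[symmetric] using \<open>0 < D\<close> \<open>s \<le> D\<close>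
    by (simp add: abs_of_nonneg field_simps)
  have "Inf {ereal (sdist v u) | u. u \<in> X} \<le> ereal (sdist v p)"
    using \<open>p \<in> X\<close> by (intro Inf_lower) blast
  also have "\<dots> = ereal (D - s)" using \<open>sdist v p = D - s\<close> by simp
  also have "\<dots> \<le> ereal (sdist v w - r) + ereal e"
    unfolding s_def D_def by (simp add: sdist_sym)
  finally show "Inf {ereal (sdist v u) | u. u \<in> X} \<le> ereal (sdist v w - r) + ereal e" .
qed

lemma Dist_ge_of_sdistH_le:
  fixes v1 v2 :: "('v::finite) state"
  assumes "depends_only_on H X" and "0 < r" and "v2 \<in> X"
    and ball: "\<forall>u. u \<notin> X \<longrightarrow> r \<le> sdist v2 u"
    and "sdistH H v1 v2 \<le> d"
  shows "ereal (r - d) \<le> Dist v1 X"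
proof (cases "v1 \<in> X")
  case True
  have "ereal (r - d) \<le> ereal (sdist v1 u)" if "u \<notin> X" for u
  proof -
    have "r \<le> sdistH H v2 u" using depends_only_on_sdistH_ge[OF assms(1) ball that] .
    also have "\<dots> \<le> sdistH H v2 v1 + sdistH H v1 u" by (rule sdistH_triangle)
    also have "\<dots> \<le> d + sdist v1 u"
      using assms(5) sdistH_le_sdist[of H v1 u] sdistH_sym[of H v1 v2] by simp
    finally show ?thesis by simp
  qed
  then have "ereal (r - d) \<le> Inf {ereal (sdist v1 u) | u. u \<notin> X}"
    by (intro Inf_greatest) blast
  then show ?thesis using True unfolding Dist_def by simp
next
  case False
  define w where "w = (\<lambda>x. if x \<in> H then v2 x else v1 x)"
  have "\<forall>x\<in>H. w x = v2 x" unfolding w_def by simp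
  from depends_only_onD[OF assms(1) this] have "w \<in> X" using \<open>v2 \<in> X\<close> by simp
  have "r \<le> sdist w u" if "u \<notin> X" for u
  proof -
    have "r \<le> sdistH H v2 u" using depends_only_on_sdistH_ge[OF assms(1) ball that] .
    also have "\<dots> = sdistH H w u" using \<open>\<forall>x\<in>H. w x = v2 x\<close> by (simp add: sdistH_cong)
    also have "\<dots> \<le> sdist w u" by (rule sdistH_le_sdist)
    finally show ?thesis .
  qed
  then have "Inf {ereal (sdist v1 u) | u. u \<in> X} \<le> ereal (sdist v1 w - r)"
    using Inf_sdist_le_of_ball[OF \<open>0 < r\<close> \<open>w \<in> X\<close> _ False] by blast
  also have "sdist v1 w = sdistH H v1 v2" unfolding w_def by (rule sdist_patch)
  finally have "Inf {ereal (sdist v1 u) | u. u \<in> X} \<le> ereal (d - r)"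
    using assms(5) by (simp add: order_trans)
  then have "- ereal (d - r) \<le> - Inf {ereal (sdist v1 u) | u. u \<in> X}"
    by (simp only: ereal_minus_le_minus)
  then have "ereal (r - d) \<le> - Inf {ereal (sdist v1 u) | u. u \<in> X}" by simp
  then show ?thesis using False unfolding Dist_def by simp
qed

lemma Dist_ge_posD:
  fixes v :: "('v::finite) state"
  assumes "0 < r" and "ereal r \<le> Dist v X"
  shows "v \<in> X" and "\<forall>u. u \<notin> X \<longrightarrow> r \<le> sdist v u"
proof -
  show "v \<in> X"
  proof (rule ccontr)
    assume "v \<notin> X"
    have "0 \<le> Inf {ereal (sdist v u) | u. u \<in> X}"
      by (rule Inf_greatest) (auto simp: sdist_def sum_nonneg)
    then have "Dist v X \<le> 0" using \<open>v \<notin> X\<close> unfolding Dist_def by simp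
    with assms(2) have "ereal r \<le> 0" by (rule order_trans)
    with \<open>0 < r\<close> show False by simp
  qed
  show "\<forall>u. u \<notin> X \<longrightarrow> r \<le> sdist v u"
  proof (intro allI impI)
    fix u
    assume "u \<notin> X"
    then have "Dist v X \<le> ereal (sdist v u)"
      using \<open>v \<in> X\<close> unfolding Dist_def by (auto intro: Inf_lower)
    with assms(2) have "ereal r \<le> ereal (sdist v u)" by (rule order_trans)
    then show "r \<le> sdist v u" by simp
  qed
qed

definition safety_margin :: "('v::finite) hp \<Rightarrow> 'v fml \<Rightarrow> 'v fml \<Rightarrow> ereal" where
  "safety_margin a pre post = Inf {Dist v (fml_sem post) | v. v \<in> SP a pre}"

lemma fwd_safe_iff_safety_margin: "fwd_safe a pre post r \<longleftrightarrow> safety_margin a pre post = ereal r"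
  unfolding fwd_safe_def safety_margin_def by auto

lemma safety_margin_ge_fwd_sim_dist:
  assumes "fwd_safe a pre post r" and "0 < r" and "fwd_sim_dist b a pre (fml_vars post) d"
  shows "ereal (r - d) \<le> safety_margin b pre post"
  unfolding safety_margin_def
proof (intro Inf_greatest, clarify)
  fix v1
  assume "v1 \<in> SP b pre"
  then obtain v2 where "v2 \<in> SP a pre" and close: "sdistH (fml_vars post) v1 v2 \<le> d"
    using assms(3) unfolding fwd_sim_dist_def by blast
  then have "ereal r \<le> Dist v2 (fml_sem post)"
    using assms(1) unfolding fwd_safe_def by (auto intro: Inf_lower)
  note inside = Dist_ge_posD[OF \<open>0 < r\<close> this]
  show "ereal (r - d) \<le> Dist v1 (fml_sem post)"
    by (rule Dist_ge_of_sdistH_le[OF depends_only_on_fml_vars \<open>0 < r\<close> inside close])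
qed

lemma safety_margin_attack_le:
  "sensor_reads ph S a \<Longrightarrow> \<forall>x\<in>S. off x \<ge> 0 \<Longrightarrow>
    safety_margin (attack ph S off a) pre post \<le> safety_margin a pre post"
  unfolding safety_margin_def using SP_subset_attack
  by (intro Inf_superset_mono) blast

theorem theorem3:
  fixes \<alpha> :: "('v::finite) hp" and S :: "'v set" and ph :: "'v \<Rightarrow> 'v"
    and pre post :: "'v fml" and off :: "'v \<Rightarrow> real" and d r :: real
  assumes "S \<subseteq> hp_vars \<alpha>"
    and "\<forall>x\<in>S. off x \<ge> 0"
    and "sensor_reads ph S \<alpha>"
    and "fwd_safe \<alpha> pre post r" and "r > 0"
    and "fwd_sim_dist (attack ph S off \<alpha>) \<alpha> pre (fml_vars post) d"
  shows "\<exists>\<delta>. fwd_robust ph \<alpha> S off pre post \<delta> \<and> \<delta> \<ge> (r - d) / r"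
proof -
  let ?m = "safety_margin (attack ph S off \<alpha>) pre post"
  have "ereal (r - d) \<le> ?m" using safety_margin_ge_fwd_sim_dist assms(4-6) .
  moreover have "?m \<le> ereal r"
    using safety_margin_attack_le[OF assms(3,2), of pre post] assms(4)
    by (simp add: fwd_safe_iff_safety_margin)
  ultimately obtain r1 where "?m = ereal r1" and "r - d \<le> r1" by (cases ?m) auto
  then have "fwd_robust ph \<alpha> S off pre post (r1 / r)"
    using assms(4,5) unfolding fwd_robust_def fwd_safe_iff_safety_margin by blast
  moreover have "(r - d) / r \<le> r1 / r"
    using \<open>r - d \<le> r1\<close> \<open>r > 0\<close> by (simp add: divide_right_mono)
  ultimately show ?thesis by blast
qed

end
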